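(* Let $k$ be a field, $E$ a $k$-vector space of dimension $n$, and $f\in\operatorname{End}_k(E)$ an endomorphism with annihilating (minimal) polynomial $x^n$. Let $e\in E$ be a vector with $f^{n-1}(e)\neq 0$. Then the generalized inverses $g\in\operatorname{End}_k(E)$ of $f$ are exactly the linear maps determined by $$g(f^i(e))=\begin{cases} f^{i-1}(e)+\lambda_i f^{n-1}(e) & \text{if } 1\le i\le n-1,\\ \tilde e & \text{if } i=0,\end{cases}$$ where $\lambda_1,\dots,\lambda_{n-1}\in k$ are arbitrary scalars and $\tilde e\in E$ is an arbitrary vector.
   Context: A generalized inverse of an endomorphism $f$ of $E$ is an endomorphism $g$ of $E$ with $f\circ g\circ f=f$. Here $\{e,f(e),\dots,f^{n-1}(e)\}$ is a basis of $E$. *)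

theory Defs
  imports Complex_Main
begin

definition generalized_inverse ::
  "('a::field \<Rightarrow> 'v::ab_group_add \<Rightarrow> 'v) \<Rightarrow> ('v \<Rightarrow> 'v) \<Rightarrow> ('v \<Rightarrow> 'v) \<Rightarrow> bool" where
  "generalized_inverse scale f g \<longleftrightarrow> Vector_Spaces.linear scale scale g \<and> f \<circ> g \<circ> f = f"

end

theory Submission
  imports Defs
begin

text \<open>The vectors f^i e, i < n, are linearly independent: applying f^(n-1-j) to a vanishing
  combination whose first j coefficients are zero leaves c_j f^(n-1) e. As dim E = n they form a
  basis, on which f is the shift f^i e \<mapsto> f^(i+1) e, so ker f is the line through f^(n-1) e.
  Evaluating f g f = f at f^(i-1) e says exactly that g (f^i e) - f^(i-1) e lies in ker f;
  conversely these conditions give f g f = f on the basis, while g e is unconstrained because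
  f (f^(n-1) e) = 0.\<close>

lemma funpow_apply_add: "(f ^^ m) ((f ^^ k) x) = (f ^^ (m + k)) x"
  by (simp add: funpow_add)

lemma (in vector_space) linear_funpow:
  assumes "Vector_Spaces.linear scale scale f"
  shows "Vector_Spaces.linear scale scale (f ^^ k)"
proof (induction k)
  case 0
  then show ?case by (simp add: linear_ident)
next
  case (Suc k)
  then show ?case
    using Vector_Spaces.linear_compose[OF Suc assms] by (simp add: comp_def)
qed

lemma (in vector_space) independent_card_dim_spans:
  assumes BV: "B \<subseteq> V" and indep: "independent B" and card: "card B = dim V"
    and dim_pos: "0 < dim V"
  shows "V \<subseteq> span B"
proof
  fix a assume aV: "a \<in> V"
  obtain A where A: "independent A" "V \<subseteq> span A" "card A = dim V"
    using basis_exists[of V] by metis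
  have "finite B" "finite A"
    using A(3) card dim_pos by (auto intro: card_ge_0_finite)
  show "a \<in> span B"
  proof (rule ccontr)
    assume "a \<notin> span B"
    then have "independent (insert a B)" "a \<notin> B"
      using indep independent_insertI span_base by blast+
    moreover have "insert a B \<subseteq> span A" using A(2) BV aV by blast
    ultimately have "card B + 1 \<le> card A"
      using independent_span_bound[OF \<open>finite A\<close>] \<open>finite B\<close> by fastforce
    then show False using A(3) card by simp
  qed
qed

locale nilpotent_chain = vector_space +
  fixes f :: "'b \<Rightarrow> 'b" and e :: 'b and n :: nat
  assumes linear_f: "Vector_Spaces.linear scale scale f"
    and nilpotent: "f ^^ n = (\<lambda>_. 0)"
    and chain_top_nonzero: "(f ^^ (n - 1)) e \<noteq> 0"
begin

lemma index_pos: "0 < n"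
  using nilpotent chain_top_nonzero by (cases n) (auto simp: fun_eq_iff)

lemma funpow_beyond_index:
  assumes "n \<le> m"
  shows "(f ^^ m) x = 0"
proof -
  interpret L: Vector_Spaces.linear scale scale "f ^^ (m - n)"
    using linear_funpow[OF linear_f] .
  have "(f ^^ m) x = (f ^^ (m - n + n)) x" using assms by simp
  also have "\<dots> = (f ^^ (m - n)) ((f ^^ n) x)" by (simp only: funpow_add comp_apply)
  also have "\<dots> = 0" using nilpotent L.zero by simp
  finally show ?thesis .
qed

lemma f_chain_top: "f ((f ^^ (n - 1)) e) = 0"
proof -
  have "f ((f ^^ (n - 1)) e) = (f ^^ Suc (n - 1)) e" by simp
  also have "\<dots> = 0" using index_pos by (intro funpow_beyond_index) simp
  finally show ?thesis .
qed

lemma funpow_chain_sum: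
  assumes "j < n" and below: "\<forall>i<j. c i = 0"
  shows "(f ^^ (n - 1 - j)) (\<Sum>i<n. c i *s (f ^^ i) e) = c j *s (f ^^ (n - 1)) e"
proof -
  interpret L: Vector_Spaces.linear scale scale "f ^^ (n - 1 - j)"
    using linear_funpow[OF linear_f] .
  have "(f ^^ (n - 1 - j)) (\<Sum>i<n. c i *s (f ^^ i) e) = (\<Sum>i<n. c i *s (f ^^ (n - 1 - j + i)) e)"
    unfolding L.sum L.scale by (simp add: funpow_apply_add)
  also have "\<dots> = (\<Sum>i<n. if i = j then c j *s (f ^^ (n - 1)) e else 0)"
  proof (rule sum.cong[OF refl])
    fix i
    show "c i *s (f ^^ (n - 1 - j + i)) e = (if i = j then c j *s (f ^^ (n - 1)) e else 0)"
      using below \<open>j < n\<close> funpow_beyond_index[of "n - 1 - j + i"]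
      by (cases i j rule: linorder_cases) auto
  qed
  also have "\<dots> = c j *s (f ^^ (n - 1)) e" using \<open>j < n\<close> by simp
  finally show ?thesis .
qed

lemma chain_coeffs_vanish:
  assumes vanishes: "(f ^^ k) (\<Sum>i<n. c i *s (f ^^ i) e) = 0" and "i + k < n"
  shows "c i = 0"
proof -
  have "\<forall>i<j. c i = 0" if "j + k \<le> n" for j
    using that
  proof (induction j)
    case (Suc j)
    then have below: "\<forall>i<j. c i = 0" by simp
    interpret L: Vector_Spaces.linear scale scale "f ^^ (n - 1 - j - k)"
      using linear_funpow[OF linear_f] .
    have "c j *s (f ^^ (n - 1)) e = (f ^^ (n - 1 - j)) (\<Sum>i<n. c i *s (f ^^ i) e)"
      using funpow_chain_sum[OF _ below] Suc.prems by simp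
    also have "\<dots> = (f ^^ (n - 1 - j - k)) ((f ^^ k) (\<Sum>i<n. c i *s (f ^^ i) e))"
      using Suc.prems by (simp add: funpow_apply_add)
    also have "\<dots> = 0" using vanishes L.zero by simp
    finally have "c j = 0" using chain_top_nonzero by simp
    with below show ?case using less_Suc_eq by auto
  qed simp
  then show ?thesis using \<open>i + k < n\<close> by (metis Suc_leI add_Suc lessI)
qed

definition chain :: "'b set" where
  "chain = (\<lambda>i. (f ^^ i) e) ` {..<n}"

lemma inj_on_chain: "inj_on (\<lambda>i. (f ^^ i) e) {..<n}"
proof -
  have False if "i < j" "j < n" "(f ^^ i) e = (f ^^ j) e" for i j
  proof -
    have "(f ^^ (n - 1)) e = (f ^^ (n - 1 - i)) ((f ^^ i) e)"
      using \<open>i < j\<close> \<open>j < n\<close> by (simp add: funpow_apply_add)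
    also have "\<dots> = (f ^^ (n - 1 - i + j)) e"
      using \<open>(f ^^ i) e = (f ^^ j) e\<close> by (simp add: funpow_apply_add)
    also have "\<dots> = 0" using that by (intro funpow_beyond_index) simp
    finally show False using chain_top_nonzero by simp
  qed
  then show ?thesis unfolding inj_on_def by (metis lessThan_iff linorder_neqE_nat)
qed

lemma sum_chain: "(\<Sum>v\<in>chain. u v *s v) = (\<Sum>i<n. u ((f ^^ i) e) *s (f ^^ i) e)"
  unfolding chain_def by (simp add: sum.reindex[OF inj_on_chain])

lemma card_chain: "card chain = n"
  unfolding chain_def using card_image[OF inj_on_chain] by simp

lemma independent_chain: "independent chain"
proof (rule independent_if_scalars_zero)
  show "finite chain" unfolding chain_def by simp
  fix u v assume "(\<Sum>v\<in>chain. u v *s v) = 0" and "v \<in> chain"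
  moreover from \<open>v \<in> chain\<close> obtain i where "i < n" "v = (f ^^ i) e"
    unfolding chain_def by auto
  ultimately show "u v = 0"
    using chain_coeffs_vanish[of 0 "\<lambda>i. u ((f ^^ i) e)" i] by (simp add: sum_chain)
qed

end

locale nilpotent_cyclic = nilpotent_chain +
  assumes dim_UNIV: "dim UNIV = n"
begin

lemma span_chain: "span chain = UNIV"
  using independent_card_dim_spans[of chain UNIV] independent_chain card_chain dim_UNIV index_pos
  by auto

lemma chain_coordinates:
  obtains c where "x = (\<Sum>i<n. c i *s (f ^^ i) e)"
proof -
  have "finite chain" unfolding chain_def by simp
  then obtain u where "x = (\<Sum>v\<in>chain. u v *s v)"
    using span_chain span_finite[of chain] by blast
  then show thesis using that by (simp add: sum_chain)
qed

lemma kernel_f_spanned_by_top: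
  assumes "f y = 0"
  obtains l where "y = l *s (f ^^ (n - 1)) e"
proof -
  obtain c where y: "y = (\<Sum>i<n. c i *s (f ^^ i) e)" by (rule chain_coordinates)
  have "c i = 0" if "i < n - 1" for i
    using chain_coeffs_vanish[of 1 c i] assms y that by simp
  moreover have "y = (\<Sum>i<Suc (n - 1). c i *s (f ^^ i) e)"
    using y index_pos by simp
  ultimately have "y = c (n - 1) *s (f ^^ (n - 1)) e" by simp
  then show thesis by (rule that)
qed

lemma generalized_inverse_chain_image:
  assumes "generalized_inverse scale f g" and "i \<in> {1..n - 1}"
  obtains l where "g ((f ^^ i) e) = (f ^^ (i - 1)) e + l *s (f ^^ (n - 1)) e"
proof -
  interpret Lf: Vector_Spaces.linear scale scale f by (rule linear_f)
  have step: "(f ^^ i) e = f ((f ^^ (i - 1)) e)"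
    using assms(2) by (cases i) auto
  have "f (g ((f ^^ i) e)) = (f ^^ i) e"
    using assms(1) step unfolding generalized_inverse_def by (metis comp_apply)
  then have "f (g ((f ^^ i) e) - (f ^^ (i - 1)) e) = 0"
    using step by (simp add: Lf.diff)
  then obtain l where "g ((f ^^ i) e) - (f ^^ (i - 1)) e = l *s (f ^^ (n - 1)) e"
    by (rule kernel_f_spanned_by_top)
  then have "g ((f ^^ i) e) = (f ^^ (i - 1)) e + l *s (f ^^ (n - 1)) e"
    by (metis add.commute diff_add_cancel)
  then show thesis by (rule that)
qed

lemma generalized_inverseI:
  assumes lin_g: "Vector_Spaces.linear scale scale g"
    and chain_image: "\<forall>i\<in>{1..n - 1}. g ((f ^^ i) e) = (f ^^ (i - 1)) e + lam i *s (f ^^ (n - 1)) e"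
  shows "generalized_inverse scale f g"
proof -
  interpret Lf: Vector_Spaces.linear scale scale f by (rule linear_f)
  interpret Lg: Vector_Spaces.linear scale scale g by (rule lin_g)
  interpret vector_space_pair scale scale ..
  have "Vector_Spaces.linear scale scale (f \<circ> g \<circ> f)"
    using Vector_Spaces.linear_compose[OF Vector_Spaces.linear_compose[OF linear_f lin_g] linear_f]
    by (simp add: o_assoc)
  moreover have "(f \<circ> g \<circ> f) b = f b" if "b \<in> chain" for b
  proof -
    obtain k where "k < n" and b: "b = (f ^^ k) e" using \<open>b \<in> chain\<close> unfolding chain_def by auto
    show ?thesis
    proof (cases "k = n - 1")
      case True
      then show ?thesis using b f_chain_top by simp
    next
      case False
      then have "Suc k \<in> {1..n - 1}" using \<open>k < n\<close> by auto
      then have "g (f b) = b + lam (Suc k) *s (f ^^ (n - 1)) e"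
        using chain_image b by fastforce
      then show ?thesis using f_chain_top by (simp add: Lf.add Lf.scale)
    qed
  qed
  ultimately have "(f \<circ> g \<circ> f) x = f x" for x
    using linear_eq_on[OF _ linear_f] span_chain by blast
  then show ?thesis using lin_g unfolding generalized_inverse_def by auto
qed

end

theorem lemma3p7:
  fixes scale :: "'a::field \<Rightarrow> 'v::ab_group_add \<Rightarrow> 'v"
    and f :: "'v \<Rightarrow> 'v" and e :: 'v and n :: nat
  assumes vs: "vector_space scale"
    and dim: "vector_space.dim scale (UNIV :: 'v set) = n"
    and lin: "Vector_Spaces.linear scale scale f"
    and ann: "f ^^ n = (\<lambda>_. 0)"
    and minimal: "\<forall>m<n. f ^^ m \<noteq> (\<lambda>_. 0)"
    and e: "(f ^^ (n - 1)) e \<noteq> 0"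
  shows "{g. generalized_inverse scale f g} =
         {g. Vector_Spaces.linear scale scale g \<and>
             (\<exists>(lam::nat \<Rightarrow> 'a) (e'::'v).
                g e = e' \<and>
                (\<forall>i\<in>{1..n-1}. g ((f ^^ i) e) = (f ^^ (i - 1)) e + scale (lam i) ((f ^^ (n - 1)) e)))}"
proof -
  interpret nilpotent_cyclic scale f e n
    using vs lin ann e dim
    by (simp add: nilpotent_cyclic_def nilpotent_cyclic_axioms_def
        nilpotent_chain_def nilpotent_chain_axioms_def)
  have "\<exists>lam. \<forall>i\<in>{1..n-1}. g ((f ^^ i) e) = (f ^^ (i - 1)) e + scale (lam i) ((f ^^ (n - 1)) e)"
    if ginv: "generalized_inverse scale f g" for g
  proof (rule bchoice, rule ballI)
    fix i assume "i \<in> {1..n-1}"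
    then obtain l where "g ((f ^^ i) e) = (f ^^ (i - 1)) e + scale l ((f ^^ (n - 1)) e)"
      by (rule generalized_inverse_chain_image[OF ginv])
    then show "\<exists>l. g ((f ^^ i) e) = (f ^^ (i - 1)) e + scale l ((f ^^ (n - 1)) e)" ..
  qed
  then show ?thesis
    using generalized_inverseI by (auto simp: generalized_inverse_def)
qed

end
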